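(* Let $G$ be a finite abelian group and let $1\leq p,q\leq 2$. Let $\Sigma\subset\widehat{G}$ satisfy the $(p,q)$-restriction estimate with constant $\rho_{p,q}(\Sigma)$, i.e. $$\Bigl(\sum_{\chi\in\Sigma}|\widehat f(\chi)|^q\Bigr)^{1/q}\leq \rho_{p,q}(\Sigma)\Bigl(\sum_{x\in G}|f(x)|^p\Bigr)^{1/p}\quad\text{for all } f:G\to\mathbb{C}.$$ Let $S\subset G$ be such that $\rho_{p,q}(\Sigma)\,|S|^{1/p}<|G|^{\frac1q-\frac12}$. Then $(S,\Sigma)$ is a strong annihilating pair: for every $f:G\to\mathbb{C}$, $$\|f\|_{L^2(G)}\leq A_{ann}(S,\Sigma)\bigl(\|f\|_{L^2(G\setminus S)}+\|\widehat f\|_{L^2(\widehat G\setminus\Sigma)}\bigr),\qquad A_{ann}(S,\Sigma)=1+\frac{|S|^{1/2}\,|\widehat G\setminus\Sigma|^{\frac1q-\frac12}}{|G|^{\frac1q-\frac12}-\rho_{p,q}(\Sigma)|S|^{1/p}}.$$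
   Context: $G$ and $\widehat G$ (the group of characters $\chi:G\to\{|z|=1\}$) are equipped with counting measure, $|\cdot|$ denotes cardinality, and $|\widehat G|=|G|$. The Fourier transform is $\widehat f(\chi)=|G|^{-1/2}\sum_{x\in G}f(x)\overline{\chi(x)}$, which is unitary $L^2(G)\to L^2(\widehat G)$. All $L^r$ norms are with respect to counting measure. *)

theory Defs
  imports "HOL-Analysis.Analysis"
begin

definition characters :: "('g::{ab_group_add,finite} \<Rightarrow> complex) set" where
  "characters = {c. (\<forall>x y. c (x + y) = c x * c y) \<and> (\<forall>x. cmod (c x) = 1)}"

text \<open>Unitary Fourier transform, counting measure.\<close>
definition fourier :: "('g::{ab_group_add,finite} \<Rightarrow> complex) \<Rightarrow> ('g \<Rightarrow> complex) \<Rightarrow> complex" where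
  "fourier f c = (1 / sqrt (real CARD('g))) * (\<Sum>x\<in>UNIV. f x * cnj (c x))"

end

theory Submission
  imports Defs
begin

text \<open>Write $f = g + h$ with $g = f \cdot 1_S$. By Fourier inversion and the power mean
  inequality, $|G|^{1/q-1/2}\|g\|_\infty \le \|\widehat g\|_{L^q(\widehat G)}$. Split the
  right-hand side over $\Sigma$ and its complement: the restriction estimate bounds the first
  part by $\rho\,|S|^{1/p}\|g\|_\infty$, which the smallness hypothesis lets us absorb into the
  left-hand side, and the power mean inequality and Plancherel bound the second part by
  $|\widehat G \setminus \Sigma|^{1/q-1/2}(\|\widehat f\|_{L^2(\widehat G\setminus\Sigma)}
  + \|f\|_{L^2(G \setminus S)})$. Finally $\|f\|_2 \le \|h\|_2 + |S|^{1/2}\|g\|_\infty$.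

  Inversion and Plancherel need enough characters: they are obtained by extending a character
  from a subgroup $H$ to the subgroup generated by $H$ and one more element $g$, choosing the
  value at $g$ as an $m$-th root of the value at $m g$, where $m$ is least with $m g \in H$.\<close>

section \<open>Characters of finite abelian groups\<close>

primrec nat_mult :: "nat \<Rightarrow> 'a::monoid_add \<Rightarrow> 'a" where
  "nat_mult 0 x = 0"
| "nat_mult (Suc n) x = x + nat_mult n x"

lemma nat_mult_add: "nat_mult (m + n) x = nat_mult m x + nat_mult n x"
  by (induction m) (auto simp: add.assoc)

lemma nat_mult_mult: "nat_mult (m * n) x = nat_mult m (nat_mult n x)"
  by (induction m) (auto simp: nat_mult_add)

lemma nat_mult_one [simp]: "nat_mult 1 x = x"
  by simp

lemma ex_nat_mult_eq_0:
  fixes x :: "'g::{ab_group_add,finite}"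
  shows "\<exists>n>0. nat_mult n x = 0"
proof -
  have "\<not> inj_on (\<lambda>k. nat_mult k x) {..CARD('g)}"
  proof
    assume "inj_on (\<lambda>k. nat_mult k x) {..CARD('g)}"
    then have "card ((\<lambda>k. nat_mult k x) ` {..CARD('g)}) = Suc CARD('g)"
      by (simp add: card_image)
    moreover have "card ((\<lambda>k. nat_mult k x) ` {..CARD('g)}) \<le> CARD('g)"
      by (rule card_mono) auto
    ultimately show False by simp
  qed
  then obtain i j where "i < j" "nat_mult i x = nat_mult j x"
    unfolding inj_on_def by (metis linorder_neqE_nat)
  then have "nat_mult (j - i) x + nat_mult i x = nat_mult i x"
    by (metis le_add_diff_inverse2 less_imp_le nat_mult_add)
  with \<open>i < j\<close> show ?thesis
    by (intro exI[of _ "j - i"]) auto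
qed

definition add_submonoid :: "'a::monoid_add set \<Rightarrow> bool" where
  "add_submonoid H \<longleftrightarrow> 0 \<in> H \<and> (\<forall>a\<in>H. \<forall>b\<in>H. a + b \<in> H)"

lemma add_submonoid_nat_mult: "add_submonoid H \<Longrightarrow> a \<in> H \<Longrightarrow> nat_mult n a \<in> H"
  by (induction n) (auto simp: add_submonoid_def)

text \<open>A submonoid of a finite group is a subgroup, since $-b$ is a multiple of $b$.\<close>

lemma add_submonoid_diff:
  fixes a b :: "'g::{ab_group_add,finite}"
  assumes H: "add_submonoid H" and "a \<in> H" "b \<in> H"
  shows "a - b \<in> H"
proof -
  obtain n where "n > 0" "nat_mult n b = 0"
    using ex_nat_mult_eq_0 by blast
  then have "- b = nat_mult (n - 1) b"
    by (metis Suc_diff_1 add_eq_0_iff nat_mult.simps(2))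
  then have "a + - b \<in> H"
    using assms add_submonoid_nat_mult[OF H \<open>b \<in> H\<close>] by (simp add: add_submonoid_def)
  then show ?thesis
    by simp
qed

lemma ex_least_nat_mult_mem:
  fixes g :: "'g::{ab_group_add,finite}"
  assumes "0 \<in> H"
  obtains m where "m > 0" "nat_mult m g \<in> H" "\<And>r. 0 < r \<Longrightarrow> r < m \<Longrightarrow> nat_mult r g \<notin> H"
proof -
  define P where "P m \<longleftrightarrow> m > 0 \<and> nat_mult m g \<in> H" for m
  have "\<exists>m. P m"
    using ex_nat_mult_eq_0[of g] assms unfolding P_def by auto
  then have "P (LEAST m. P m)" "\<And>r. r < (LEAST m. P m) \<Longrightarrow> \<not> P r"
    by (auto intro: LeastI_ex dest: not_less_Least)
  then show ?thesis
    using that unfolding P_def by blast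
qed

definition character_on :: "'a::plus set \<Rightarrow> ('a \<Rightarrow> complex) \<Rightarrow> bool" where
  "character_on H \<psi> \<longleftrightarrow> (\<forall>a\<in>H. \<forall>b\<in>H. \<psi> (a + b) = \<psi> a * \<psi> b) \<and> (\<forall>a\<in>H. cmod (\<psi> a) = 1)"

lemma characters_eq: "characters = {\<xi>. character_on UNIV \<xi>}"
  by (auto simp: characters_def character_on_def)

lemma character_on_0: "add_submonoid H \<Longrightarrow> character_on H \<psi> \<Longrightarrow> \<psi> 0 = 1"
  unfolding add_submonoid_def character_on_def
  by (metis add_0 mult_cancel_right1 norm_zero zero_neq_one)

lemma character_on_nat_mult:
  assumes "add_submonoid H" "character_on H \<psi>" "a \<in> H"
  shows "\<psi> (nat_mult n a) = \<psi> a ^ n"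
  using assms add_submonoid_nat_mult[OF assms(1,3)]
  by (induction n) (auto simp: character_on_0 character_on_def)

definition adjoin :: "'a::monoid_add set \<Rightarrow> 'a \<Rightarrow> 'a set" where
  "adjoin H g = {h + nat_mult k g | h k. h \<in> H}"

lemma add_submonoid_adjoin:
  fixes g :: "'a::comm_monoid_add"
  assumes "add_submonoid H"
  shows "add_submonoid (adjoin H g)" "H \<subseteq> adjoin H g" "g \<in> adjoin H g"
proof -
  have "h + nat_mult k g + (h' + nat_mult k' g) = (h + h') + nat_mult (k + k') g" for h h' k k'
    by (simp add: nat_mult_add ac_simps)
  moreover have "0 = 0 + nat_mult 0 g"
    by simp
  ultimately show "add_submonoid (adjoin H g)"
    using assms unfolding add_submonoid_def adjoin_def by blast
  show "H \<subseteq> adjoin H g"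
    unfolding adjoin_def by (force intro: exI[of _ 0])
  show "g \<in> adjoin H g"
    using assms unfolding adjoin_def add_submonoid_def by (force intro: exI[of _ 1])
qed

lemma nth_root_exists:
  fixes z :: complex
  assumes "n > 0"
  shows "\<exists>w. w ^ n = z"
proof -
  have "rcis (root n (cmod z)) (Arg z / n) ^ n = z"
    using assms by (simp add: DeMoivre2 real_root_pow_pos2 rcis_cmod_Arg)
  then show ?thesis
    by blast
qed

context
  fixes H :: "'g::{ab_group_add,finite} set" and \<psi> g m w
  assumes H: "add_submonoid H" and \<psi>: "character_on H \<psi>"
    and m: "m > 0" "nat_mult m g \<in> H"
    and m_least: "\<And>r. 0 < r \<Longrightarrow> r < m \<Longrightarrow> nat_mult r g \<notin> H"
    and w: "w ^ m = \<psi> (nat_mult m g)"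
begin

text \<open>Every $d$ with $d g \in H$ is a multiple of the least such $m$.\<close>

lemma character_on_nat_mult_mem:
  assumes "nat_mult d g \<in> H"
  shows "\<psi> (nat_mult d g) = w ^ d"
proof -
  define q r where "q = d div m" and "r = d mod m"
  have d: "d = r + q * m"
    by (simp add: q_def r_def)
  have "nat_mult r g = nat_mult d g - nat_mult q (nat_mult m g)"
    unfolding d nat_mult_add nat_mult_mult by simp
  then have "nat_mult r g \<in> H"
    using add_submonoid_diff[OF H assms add_submonoid_nat_mult[OF H m(2)]] by simp
  moreover have "r < m"
    using m q_def r_def by simp
  ultimately have "r = 0"
    using m_least by blast
  then have "\<psi> (nat_mult d g) = \<psi> (nat_mult m g) ^ q"
    using d character_on_nat_mult[OF H \<psi> m(2)] by (simp add: nat_mult_mult)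
  also have "\<dots> = w ^ d"
    using d \<open>r = 0\<close> by (simp add: w[symmetric] power_mult mult.commute)
  finally show ?thesis .
qed

lemma norm_root: "cmod w = 1"
proof -
  have "cmod w ^ m = 1"
    using \<psi> m by (simp add: character_on_def norm_power[symmetric] w)
  then show ?thesis
    using m power_eq_imp_eq_base[of "cmod w" m 1] by simp
qed

lemma character_on_adjoin_well_defined:
  assumes "h \<in> H" "h' \<in> H" "h + nat_mult k g = h' + nat_mult k' g"
  shows "\<psi> h * w ^ k = \<psi> h' * w ^ k'"
proof -
  have *: "\<psi> h * w ^ k = \<psi> h' * w ^ k'"
    if "h \<in> H" "h' \<in> H" "h + nat_mult k g = h' + nat_mult k' g" "k' \<le> k" for h h' k k'
  proof -
    have "h + nat_mult (k - k') g + nat_mult k' g = h' + nat_mult k' g"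
      using that(3,4) nat_mult_add[of "k - k'" k' g] by (simp add: add.assoc)
    then have h': "h' = h + nat_mult (k - k') g"
      by simp
    then have "nat_mult (k - k') g \<in> H"
      using add_submonoid_diff[OF H that(2,1)] by simp
    then have "\<psi> h' = \<psi> h * w ^ (k - k')"
      using \<psi> that(1) h' character_on_nat_mult_mem by (simp add: character_on_def)
    then show ?thesis
      using \<open>k' \<le> k\<close> by (simp add: mult.assoc power_add[symmetric])
  qed
  show ?thesis
    using *[of h h' k k'] *[of h' h k' k] assms by (cases "k' \<le> k") auto
qed

lemma character_on_adjoin:
  "\<exists>\<psi>'. character_on (adjoin H g) \<psi>' \<and> (\<forall>a\<in>H. \<psi>' a = \<psi> a) \<and> \<psi>' g = w"
proof -
  define \<psi>' where "\<psi>' y = (SOME z. \<exists>h k. h \<in> H \<and> y = h + nat_mult k g \<and> z = \<psi> h * w ^ k)" for y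
  have \<psi>'_eq: "\<psi>' (h + nat_mult k g) = \<psi> h * w ^ k" if "h \<in> H" for h k
  proof -
    have "\<exists>h' k'. h' \<in> H \<and> h + nat_mult k g = h' + nat_mult k' g \<and> \<psi>' (h + nat_mult k g) = \<psi> h' * w ^ k'"
      unfolding \<psi>'_def by (rule someI_ex) (use that in blast)
    then obtain h' k' where h': "h' \<in> H" "h + nat_mult k g = h' + nat_mult k' g"
      "\<psi>' (h + nat_mult k g) = \<psi> h' * w ^ k'"
      by blast
    then show ?thesis
      using character_on_adjoin_well_defined[OF that h'(1,2)] by simp
  qed
  have "character_on (adjoin H g) \<psi>'"
    unfolding character_on_def adjoin_def
  proof safe
    fix h k h' k' assume hh': "h \<in> H" "h' \<in> H"
    have "h + nat_mult k g + (h' + nat_mult k' g) = (h + h') + nat_mult (k + k') g"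
      by (simp add: nat_mult_add ac_simps)
    moreover have "h + h' \<in> H"
      using H hh' by (simp add: add_submonoid_def)
    ultimately have "\<psi>' (h + nat_mult k g + (h' + nat_mult k' g)) = \<psi> (h + h') * w ^ (k + k')"
      by (simp only: \<psi>'_eq)
    also have "\<dots> = \<psi>' (h + nat_mult k g) * \<psi>' (h' + nat_mult k' g)"
      using \<psi> hh' by (simp add: \<psi>'_eq character_on_def power_add)
    finally show "\<psi>' (h + nat_mult k g + (h' + nat_mult k' g)) = \<psi>' (h + nat_mult k g) * \<psi>' (h' + nat_mult k' g)" .
  next
    fix h k assume "h \<in> H"
    then show "cmod (\<psi>' (h + nat_mult k g)) = 1"
      using \<psi> norm_root by (simp add: \<psi>'_eq character_on_def norm_mult norm_power)
  qed
  moreover have "\<psi>' a = \<psi> a" if "a \<in> H" for a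
    using \<psi>'_eq[OF that, of 0] by simp
  moreover have "\<psi>' g = w"
    using \<psi>'_eq[of 0 1] H character_on_0[OF H \<psi>] by (simp add: add_submonoid_def)
  ultimately show ?thesis
    by blast
qed

end

lemma character_on_extends:
  fixes H :: "'g::{ab_group_add,finite} set"
  assumes "add_submonoid H" "character_on H \<psi>"
  shows "\<exists>\<xi>\<in>characters. \<forall>a\<in>H. \<xi> a = \<psi> a"
  using assms
proof (induction "card (UNIV - H)" arbitrary: H \<psi> rule: less_induct)
  case less
  show ?case
  proof (cases "H = UNIV")
    case True
    then show ?thesis
      using less.prems by (auto simp: characters_eq)
  next
    case False
    then obtain g where "g \<notin> H"
      by auto
    obtain m where m: "m > 0" "nat_mult m g \<in> H" "\<And>r. 0 < r \<Longrightarrow> r < m \<Longrightarrow> nat_mult r g \<notin> H"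
      using ex_least_nat_mult_mem less.prems(1) unfolding add_submonoid_def by blast
    obtain w where w: "w ^ m = \<psi> (nat_mult m g)"
      using nth_root_exists[OF m(1)] by blast
    obtain \<psi>' where \<psi>': "character_on (adjoin H g) \<psi>'" "\<forall>a\<in>H. \<psi>' a = \<psi> a"
      using character_on_adjoin[OF less.prems m w] by blast
    have "card (UNIV - adjoin H g) < card (UNIV - H)"
      using add_submonoid_adjoin(2,3)[OF less.prems(1), of g] \<open>g \<notin> H\<close>
      by (intro psubset_card_mono) auto
    then obtain \<xi> where \<xi>: "\<xi> \<in> characters" "\<forall>a\<in>adjoin H g. \<xi> a = \<psi>' a"
      using less.hyps add_submonoid_adjoin(1)[OF less.prems(1)] \<psi>'(1) by blast
    have "\<xi> a = \<psi> a" if "a \<in> H" for a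
      using that \<xi>(2) \<psi>'(2) add_submonoid_adjoin(2)[OF less.prems(1), of g] by auto
    with \<xi>(1) show ?thesis
      by blast
  qed
qed

lemma characters_separate_points:
  fixes x :: "'g::{ab_group_add,finite}"
  assumes "x \<noteq> 0"
  shows "\<exists>\<xi>\<in>characters. \<xi> x \<noteq> 1"
proof -
  have triv: "add_submonoid {0::'g}" "character_on {0::'g} (\<lambda>_. 1)"
    by (auto simp: add_submonoid_def character_on_def)
  obtain m where m: "m > 0" "nat_mult m x \<in> {0}" "\<And>r. 0 < r \<Longrightarrow> r < m \<Longrightarrow> nat_mult r x \<notin> {0}"
    using ex_least_nat_mult_mem[of "{0}" x] by blast
  have "m \<noteq> 1"
  proof
    assume "m = 1"
    then show False
      using m(2) assms by simp
  qed
  have "{z::complex. z ^ m = 1} \<noteq> {1}"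
  proof
    assume "{z::complex. z ^ m = 1} = {1}"
    then show False
      using card_roots_unity_eq[OF m(1)] \<open>m \<noteq> 1\<close> by simp
  qed
  then obtain w :: complex where w: "w ^ m = 1" "w \<noteq> 1"
    by auto
  obtain \<psi> where \<psi>: "character_on (adjoin {0} x) \<psi>" "\<psi> x = w"
    using character_on_adjoin[OF triv m] w(1) by auto
  obtain \<xi> where \<xi>: "\<xi> \<in> characters" "\<forall>a\<in>adjoin {0} x. \<xi> a = \<psi> a"
    using character_on_extends[OF add_submonoid_adjoin(1)[OF triv(1)] \<psi>(1)] by blast
  have "\<xi> x = w"
    using \<xi>(2) add_submonoid_adjoin(3)[OF triv(1), of x] \<psi>(2) by simp
  then show ?thesis
    using \<xi>(1) w(2) by blast
qed

section \<open>Orthogonality, inversion and Plancherel\<close>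

lemma finite_characters: "finite (characters :: ('g::{ab_group_add,finite} \<Rightarrow> complex) set)"
proof -
  define ord where "ord x = (SOME n. n > 0 \<and> nat_mult n x = 0)" for x :: 'g
  have ord: "ord x > 0 \<and> nat_mult (ord x) x = 0" for x
    unfolding ord_def using ex_nat_mult_eq_0[of x] by (rule someI_ex)
  have "characters \<subseteq> (\<Pi>\<^sub>E x\<in>UNIV. {z. z ^ ord x = 1})"
  proof
    fix \<xi> :: "'g \<Rightarrow> complex"
    assume "\<xi> \<in> characters"
    then have "\<xi> x ^ ord x = 1" for x
      using character_on_nat_mult[of UNIV \<xi> x "ord x"] character_on_0[of UNIV \<xi>] ord[of x]
      by (simp add: add_submonoid_def characters_eq)
    then show "\<xi> \<in> (\<Pi>\<^sub>E x\<in>UNIV. {z. z ^ ord x = 1})"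
      by auto
  qed
  moreover have "finite (\<Pi>\<^sub>E x\<in>UNIV. {z::complex. z ^ ord x = 1})"
    using ord by (intro finite_PiE finite_roots_unity) (auto simp: Suc_le_eq)
  ultimately show ?thesis
    by (rule finite_subset)
qed

context
  fixes \<xi> :: "'g::{ab_group_add,finite} \<Rightarrow> complex"
  assumes \<xi>: "\<xi> \<in> characters"
begin

lemma character_add: "\<xi> (a + b) = \<xi> a * \<xi> b"
  using \<xi> by (simp add: characters_def)

lemma norm_character: "cmod (\<xi> a) = 1"
  using \<xi> by (simp add: characters_def)

lemma character_zero: "\<xi> 0 = 1"
  using \<xi> character_on_0[of UNIV \<xi>] by (simp add: add_submonoid_def characters_eq)

lemma cnj_character_mult: "cnj (\<xi> a) * \<xi> a = 1"
  using norm_character[of a] by (metis complex_norm_square mult.commute of_real_1 power_one)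

lemma character_diff: "\<xi> (a - b) = \<xi> a * cnj (\<xi> b)"
proof -
  have "\<xi> (a - b) * \<xi> b = \<xi> a"
    by (metis character_add diff_add_cancel)
  then show ?thesis
    using cnj_character_mult[of b] by (metis mult.assoc mult.commute mult_1_right)
qed

lemma sum_character: "(\<Sum>x\<in>UNIV. \<xi> x) = (if \<xi> = (\<lambda>_. 1) then of_nat CARD('g) else 0)"
proof (cases "\<xi> = (\<lambda>_. 1)")
  case False
  then obtain a where a: "\<xi> a \<noteq> 1"
    by auto
  have "(\<Sum>x\<in>UNIV. \<xi> x) = (\<Sum>x\<in>UNIV. \<xi> (a + x))"
    by (rule sum.reindex_bij_witness[of _ "\<lambda>x. a + x" "\<lambda>x. x - a"]) auto
  also have "\<dots> = \<xi> a * (\<Sum>x\<in>UNIV. \<xi> x)"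
    by (simp add: character_add sum_distrib_left)
  finally have "(1 - \<xi> a) * (\<Sum>x\<in>UNIV. \<xi> x) = 0"
    by (simp add: algebra_simps)
  then show ?thesis
    using a False by simp
qed simp

end

lemma characters_mult_closed:
  assumes "\<xi> \<in> characters" "\<eta> \<in> characters"
  shows "(\<lambda>x. \<xi> x * \<eta> x) \<in> characters"
  using character_add[OF assms(1)] character_add[OF assms(2)]
    norm_character[OF assms(1)] norm_character[OF assms(2)]
  unfolding characters_def by (simp add: norm_mult mult_ac)

lemma characters_cnj_closed:
  assumes "\<xi> \<in> characters"
  shows "(\<lambda>x. cnj (\<xi> x)) \<in> characters"
  using character_add[OF assms] norm_character[OF assms] unfolding characters_def by simp

lemma sum_characters_card:
  fixes x :: "'g::{ab_group_add,finite}"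
  shows "(\<Sum>\<xi>\<in>characters. \<xi> x) = (if x = 0 then of_nat (card (characters :: ('g \<Rightarrow> complex) set)) else 0)"
proof (cases "x = 0")
  case False
  then obtain \<eta> where \<eta>: "\<eta> \<in> characters" "\<eta> x \<noteq> 1"
    using characters_separate_points by blast
  have cancel: "cnj (\<eta> y) * (\<eta> y * z) = z" for y z
    by (simp add: mult.assoc[symmetric] cnj_character_mult[OF \<eta>(1)])
  then have cancel': "\<eta> y * (cnj (\<eta> y) * z) = z" for y z
    by (metis mult.left_commute)
  have "bij_betw (\<lambda>\<xi> y. \<eta> y * \<xi> y) characters characters"
    by (rule bij_betwI[where g = "\<lambda>\<xi> y. cnj (\<eta> y) * \<xi> y"])
      (auto simp: cancel cancel' \<eta>(1) characters_mult_closed characters_cnj_closed)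
  then have "(\<Sum>\<xi>\<in>characters. \<xi> x) = (\<Sum>\<xi>\<in>characters. \<eta> x * \<xi> x)"
    by (rule sum.reindex_bij_betw[symmetric])
  also have "\<dots> = \<eta> x * (\<Sum>\<xi>\<in>characters. \<xi> x)"
    by (simp add: sum_distrib_left)
  finally have "(1 - \<eta> x) * (\<Sum>\<xi>\<in>characters. \<xi> x) = 0"
    by (simp add: algebra_simps)
  then show ?thesis
    using \<eta>(2) False by simp
qed (simp add: character_zero)

lemma card_characters: "card (characters :: ('g::{ab_group_add,finite} \<Rightarrow> complex) set) = CARD('g)"
proof -
  let ?C = "characters :: ('g \<Rightarrow> complex) set"
  have "(\<Sum>\<xi>\<in>?C. \<Sum>x\<in>UNIV. \<xi> x) = (\<Sum>\<xi>\<in>?C. if \<xi> = (\<lambda>_. 1) then of_nat CARD('g) else 0)"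
    by (auto intro!: sum.cong simp: sum_character)
  also have "\<dots> = of_nat CARD('g)"
    by (subst sum.delta[OF finite_characters]) (simp add: characters_def)
  moreover have "(\<Sum>\<xi>\<in>?C. \<Sum>x\<in>UNIV. \<xi> x) = (\<Sum>x\<in>UNIV. \<Sum>\<xi>\<in>?C. \<xi> x)"
    by (rule sum.swap)
  moreover have "\<dots> = of_nat (card ?C)"
    by (simp add: sum_characters_card)
  ultimately show ?thesis
    by (metis of_nat_eq_iff)
qed

lemma sum_characters:
  fixes x :: "'g::{ab_group_add,finite}"
  shows "(\<Sum>\<xi>\<in>characters. \<xi> x) = (if x = 0 then of_nat CARD('g) else 0)"
  using sum_characters_card[of x] by (simp add: card_characters)

lemma inverse_sqrt_card_square:
  "complex_of_real (1 / sqrt (real CARD('g::finite))) * complex_of_real (1 / sqrt (real CARD('g)))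
     * of_nat CARD('g) = 1"
proof -
  have "1 / sqrt (real CARD('g)) * (1 / sqrt (real CARD('g))) * real CARD('g) = 1"
    by simp
  then show ?thesis
    by (metis of_real_1 of_real_mult of_real_of_nat_eq)
qed

lemma fourier_inversion:
  fixes f :: "'g::{ab_group_add,finite} \<Rightarrow> complex"
  shows "f x = (1 / sqrt (real CARD('g))) * (\<Sum>\<xi>\<in>characters. fourier f \<xi> * \<xi> x)"
proof -
  let ?c = "complex_of_real (1 / sqrt (real CARD('g)))"
  have "fourier f \<xi> * \<xi> x = ?c * (\<Sum>y\<in>UNIV. f y * \<xi> (x - y))" if "\<xi> \<in> characters" for \<xi>
    using that by (simp add: fourier_def sum_distrib_left sum_distrib_right character_diff mult_ac)
  then have "(\<Sum>\<xi>\<in>characters. fourier f \<xi> * \<xi> x) = ?c * (\<Sum>\<xi>\<in>characters. \<Sum>y\<in>UNIV. f y * \<xi> (x - y))"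
    by (simp add: sum_distrib_left)
  also have "\<dots> = ?c * (\<Sum>y\<in>UNIV. f y * (\<Sum>\<xi>\<in>characters. \<xi> (x - y)))"
    by (subst sum.swap) (simp add: sum_distrib_left)
  also have "\<dots> = ?c * (f x * of_nat CARD('g))"
    by (simp add: sum_characters if_distrib cong: if_cong)
  finally have "?c * (\<Sum>\<xi>\<in>characters. fourier f \<xi> * \<xi> x) = ?c * ?c * of_nat CARD('g) * f x"
    by (simp add: mult_ac)
  also have "\<dots> = f x"
    by (simp only: inverse_sqrt_card_square mult_1_left)
  finally show ?thesis
    by (rule sym)
qed

lemma plancherel:
  fixes f :: "'g::{ab_group_add,finite} \<Rightarrow> complex"
  shows "(\<Sum>\<xi>\<in>characters. cmod (fourier f \<xi>) ^ 2) = (\<Sum>x\<in>UNIV. cmod (f x) ^ 2)"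
proof -
  let ?c = "complex_of_real (1 / sqrt (real CARD('g)))"
  have cnj_fourier: "cnj (fourier f \<xi>) = ?c * (\<Sum>x\<in>UNIV. cnj (f x) * \<xi> x)" for \<xi>
    by (simp add: fourier_def)
  have "complex_of_real (\<Sum>\<xi>\<in>characters. cmod (fourier f \<xi>) ^ 2)
      = (\<Sum>\<xi>\<in>characters. fourier f \<xi> * cnj (fourier f \<xi>))"
    by (simp only: of_real_sum complex_norm_square)
  also have "\<dots> = ?c * (\<Sum>\<xi>\<in>characters. \<Sum>x\<in>UNIV. cnj (f x) * (fourier f \<xi> * \<xi> x))"
    by (simp add: cnj_fourier sum_distrib_left mult_ac)
  also have "\<dots> = (\<Sum>x\<in>UNIV. (?c * (\<Sum>\<xi>\<in>characters. fourier f \<xi> * \<xi> x)) * cnj (f x))"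
    by (subst sum.swap) (simp add: sum_distrib_left sum_distrib_right mult_ac)
  also have "\<dots> = (\<Sum>x\<in>UNIV. f x * cnj (f x))"
    by (simp only: fourier_inversion[symmetric])
  also have "\<dots> = complex_of_real (\<Sum>x\<in>UNIV. cmod (f x) ^ 2)"
    by (simp only: of_real_sum complex_norm_square)
  finally show ?thesis
    by (simp only: of_real_eq_iff)
qed

section \<open>Finite \<open>L\<^sup>p\<close> norms\<close>

text \<open>Only meaningful for nonnegative \<open>f\<close>: \<open>powr\<close> is junk on negative bases.\<close>

definition Lp_set :: "real \<Rightarrow> ('a \<Rightarrow> real) \<Rightarrow> 'a set \<Rightarrow> real" where
  "Lp_set r f A = (\<Sum>i\<in>A. f i powr r) powr (1 / r)"

lemma Lp_set_nonneg: "0 \<le> Lp_set r f A"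
  by (simp add: Lp_set_def)

lemma L2_set_eq_Lp_set:
  assumes "\<And>i. i \<in> A \<Longrightarrow> 0 \<le> f i"
  shows "L2_set f A = Lp_set 2 f A"
  using assms by (simp add: L2_set_def Lp_set_def powr_half_sqrt sum_nonneg)

lemma bernoulli_inequality_powr:
  fixes t u :: real
  assumes "1 \<le> t" "0 \<le> u"
  shows "1 + t * (u - 1) \<le> u powr t"
proof (cases "u = 0")
  case False
  then have "t * (u - 1) \<le> u powr t - 1 powr t"
    using assms
    by (intro convex_on_imp_above_tangent[where A = "{0<..}", OF powr_convex[OF assms(1)]])
      (auto intro!: derivative_eq_intros simp: interior_open)
  then show ?thesis
    by simp
qed (use assms in simp)

text \<open>The power mean inequality. Normalise the $r$-th powers to have mean $m$ and apply the
  tangent line bound of $u \mapsto u^{s/r}$ at $u = 1$.\<close>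

lemma card_mult_mean_powr_le_sum_powr:
  fixes f :: "'a \<Rightarrow> real"
  assumes A: "finite A" "A \<noteq> {}" and f: "\<And>i. i \<in> A \<Longrightarrow> 0 \<le> f i" and rs: "0 < r" "r \<le> s"
  shows "real (card A) * ((\<Sum>i\<in>A. f i powr r) / card A) powr (s / r) \<le> (\<Sum>i\<in>A. f i powr s)"
proof (cases "(\<Sum>i\<in>A. f i powr r) = 0")
  case True
  then show ?thesis
    by (simp add: sum_nonneg)
next
  case False
  define N where "N = real (card A)"
  define R where "R = (\<Sum>i\<in>A. f i powr r)"
  define m where "m = R / N"
  define t where "t = s / r"
  have N: "N > 0"
    using A by (simp add: N_def card_gt_0_iff)
  have R: "R > 0"
    using False by (simp add: R_def sum_nonneg order.strict_iff_order)
  then have m: "m > 0"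
    using N by (simp add: m_def)
  have "(\<Sum>i\<in>A. f i powr r / m) = R / m"
    by (simp only: R_def sum_divide_distrib)
  also have "\<dots> = N"
    using N R by (simp add: m_def)
  finally have "N = (\<Sum>i\<in>A. 1 + t * (f i powr r / m - 1))"
    by (simp add: sum.distrib sum_subtractf sum_distrib_left[symmetric] N_def)
  also have "\<dots> \<le> (\<Sum>i\<in>A. (f i powr r / m) powr t)"
    using m rs by (intro sum_mono bernoulli_inequality_powr) (auto simp: t_def)
  also have "\<dots> = (\<Sum>i\<in>A. f i powr s) / m powr t"
    using f m rs by (simp add: sum_divide_distrib powr_divide powr_powr t_def)
  finally have "N * m powr t \<le> (\<Sum>i\<in>A. f i powr s)"
    using m by (simp add: pos_le_divide_eq)
  then show ?thesis
    by (simp add: N_def m_def R_def t_def)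
qed

lemma Lp_set_le_card_powr_Lp_set:
  fixes f :: "'a \<Rightarrow> real"
  assumes A: "finite A" and f: "\<And>i. i \<in> A \<Longrightarrow> 0 \<le> f i" and rs: "0 < r" "r \<le> s"
  shows "Lp_set r f A \<le> real (card A) powr (1 / r - 1 / s) * Lp_set s f A"
proof (cases "A = {}")
  case False
  define N where "N = real (card A)"
  define R where "R = (\<Sum>i\<in>A. f i powr r)"
  have N: "N > 0"
    using A False by (simp add: N_def card_gt_0_iff)
  have "(N * (R / N) powr (s / r)) powr (1 / s) \<le> Lp_set s f A"
    using card_mult_mean_powr_le_sum_powr[OF A False f rs] N rs unfolding Lp_set_def N_def R_def
    by (intro powr_mono2) (auto simp: sum_nonneg)
  also have "(N * (R / N) powr (s / r)) powr (1 / s) = N powr (1 / s - 1 / r) * Lp_set r f A"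
    using N rs by (simp add: Lp_set_def R_def powr_mult powr_powr powr_divide powr_diff sum_nonneg)
  finally have "N powr (1 / r - 1 / s) * (N powr (1 / s - 1 / r) * Lp_set r f A)
      \<le> N powr (1 / r - 1 / s) * Lp_set s f A"
    by (rule mult_left_mono) simp
  then show ?thesis
    using N by (simp add: powr_add[symmetric] mult.assoc[symmetric] N_def)
qed (simp add: Lp_set_def)

lemma powr_add_le_add_powr:
  fixes a b r :: real
  assumes "0 \<le> a" "0 \<le> b" "0 < r" "r \<le> 1"
  shows "(a + b) powr r \<le> a powr r + b powr r"
proof (cases "a + b = 0")
  case False
  then have ab: "a + b > 0"
    using assms by simp
  have "x \<le> x powr r" if "0 \<le> x" "x \<le> 1" for x :: real
    using powr_mono'[OF assms(4) that] that by simp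
  then have "a / (a + b) + b / (a + b) \<le> (a / (a + b)) powr r + (b / (a + b)) powr r"
    using assms ab by (intro add_mono) auto
  also have "a / (a + b) + b / (a + b) = 1"
    using ab by (simp add: add_divide_distrib[symmetric])
  finally show ?thesis
    using assms ab by (simp add: powr_divide add_divide_distrib[symmetric] pos_le_divide_eq)
qed (use assms in simp)

lemma Lp_set_split_le:
  assumes "finite A" "B \<subseteq> A" "\<And>i. i \<in> A \<Longrightarrow> 0 \<le> f i" "1 \<le> r"
  shows "Lp_set r f A \<le> Lp_set r f B + Lp_set r f (A - B)"
proof -
  have "(\<Sum>i\<in>A. f i powr r) = (\<Sum>i\<in>B. f i powr r) + (\<Sum>i\<in>A - B. f i powr r)"
    using assms(1,2) by (metis sum.subset_diff add.commute)
  then show ?thesis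
    using assms(4) unfolding Lp_set_def by (simp add: powr_add_le_add_powr sum_nonneg)
qed

definition sup_norm :: "('a::finite \<Rightarrow> 'b::real_normed_vector) \<Rightarrow> real" where
  "sup_norm f = Max (range (\<lambda>x. norm (f x)))"

lemma norm_le_sup_norm: "norm (f x) \<le> sup_norm f"
  unfolding sup_norm_def by (rule Max_ge) auto

lemma sup_norm_attained: obtains x where "sup_norm f = norm (f x)"
proof -
  have "sup_norm f \<in> range (\<lambda>x. norm (f x))"
    unfolding sup_norm_def by (rule Max_in) auto
  then show ?thesis
    using that by blast
qed

lemma sup_norm_nonneg: "0 \<le> sup_norm f"
  using norm_le_sup_norm[of f undefined] norm_ge_zero order_trans by blast

lemma Lp_set_le_card_support:
  fixes f :: "'a::finite \<Rightarrow> 'b::real_normed_vector"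
  assumes "0 < r" and supp: "\<And>x. x \<notin> S \<Longrightarrow> f x = 0"
  shows "Lp_set r (\<lambda>x. norm (f x)) UNIV \<le> real (card S) powr (1 / r) * sup_norm f"
proof -
  have "(\<Sum>x\<in>UNIV. norm (f x) powr r) \<le> (\<Sum>x\<in>UNIV. if x \<in> S then sup_norm f powr r else 0)"
    using assms by (intro sum_mono) (auto intro: powr_mono2 norm_le_sup_norm)
  also have "\<dots> = real (card S) * sup_norm f powr r"
    by (simp add: sum.If_cases)
  finally have "Lp_set r (\<lambda>x. norm (f x)) UNIV \<le> (real (card S) * sup_norm f powr r) powr (1 / r)"
    using assms unfolding Lp_set_def by (intro powr_mono2) (auto intro: sum_nonneg)
  also have "\<dots> = real (card S) powr (1 / r) * sup_norm f"
    using assms sup_norm_nonneg[of f] by (simp add: powr_mult powr_powr)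
  finally show ?thesis .
qed

lemma fourier_diff: "fourier (\<lambda>x. f x - g x) \<xi> = fourier f \<xi> - fourier g \<xi>"
  by (simp add: fourier_def sum_subtractf left_diff_distrib right_diff_distrib)

lemma L2_set_fourier_le:
  fixes f :: "'g::{ab_group_add,finite} \<Rightarrow> complex"
  assumes "A \<subseteq> characters"
  shows "L2_set (\<lambda>\<xi>. cmod (fourier f \<xi>)) A \<le> L2_set (\<lambda>x. cmod (f x)) UNIV"
  unfolding L2_set_def plancherel[symmetric]
  using assms finite_characters by (intro real_sqrt_le_mono sum_mono2) auto

lemma norm_le_Lp_set_fourier:
  fixes f :: "'g::{ab_group_add,finite} \<Rightarrow> complex"
  assumes "1 \<le> q"
  shows "cmod (f x) \<le> real CARD('g) powr (1 / 2 - 1 / q) * Lp_set q (\<lambda>\<xi>. cmod (fourier f \<xi>)) characters"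
proof -
  let ?n = "real CARD('g)" and ?F = "\<lambda>\<xi>. cmod (fourier f \<xi>)"
  have "(\<Sum>\<xi>\<in>characters. ?F \<xi>) = Lp_set 1 ?F characters"
    by (simp add: Lp_set_def sum_nonneg)
  also have "\<dots> \<le> ?n powr (1 - 1 / q) * Lp_set q ?F characters"
    using Lp_set_le_card_powr_Lp_set[OF finite_characters, of ?F 1 q] assms
    by (simp add: card_characters)
  finally have Lp_bound: "(\<Sum>\<xi>\<in>characters. ?F \<xi>) \<le> ?n powr (1 - 1 / q) * Lp_set q ?F characters" .
  have "cmod (f x) \<le> (1 / sqrt ?n) * (\<Sum>\<xi>\<in>characters. ?F \<xi>)"
    using norm_sum[of "\<lambda>\<xi>. fourier f \<xi> * \<xi> x" characters]
    by (subst fourier_inversion) (simp add: norm_mult norm_divide norm_character divide_right_mono)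
  also have "\<dots> \<le> (1 / sqrt ?n) * (?n powr (1 - 1 / q) * Lp_set q ?F characters)"
    using Lp_bound by (simp add: divide_right_mono)
  also have "\<dots> = ?n powr (1 / 2 - 1 / q) * Lp_set q ?F characters"
    by (simp add: powr_half_sqrt[symmetric] powr_minus_divide[symmetric] powr_add[symmetric])
  finally show ?thesis .
qed

section \<open>Strong annihilating pairs\<close>

lemma restriction_constant_nonneg:
  fixes Sigma :: "('g::{ab_group_add,finite} \<Rightarrow> complex) set"
  assumes "\<forall>f :: 'g \<Rightarrow> complex.
    Lp_set q (\<lambda>\<xi>. cmod (fourier f \<xi>)) Sigma \<le> rho * Lp_set p (\<lambda>x. cmod (f x)) UNIV"
  shows "0 \<le> rho"
proof -
  let ?one = "\<lambda>_ :: 'g. 1 :: complex"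
  have "0 \<le> Lp_set q (\<lambda>\<xi>. cmod (fourier ?one \<xi>)) Sigma"
    by (rule Lp_set_nonneg)
  also have "\<dots> \<le> rho * Lp_set p (\<lambda>x. cmod (?one x)) UNIV"
    using assms by (rule spec)
  finally have "0 \<le> rho * Lp_set p (\<lambda>x. cmod (?one x)) UNIV" .
  moreover have "0 < Lp_set p (\<lambda>x. cmod (?one x)) UNIV"
    by (simp add: Lp_set_def)
  ultimately show ?thesis
    by (simp add: zero_le_mult_iff)
qed

lemma sup_norm_le_fourier_off_Sigma:
  fixes g :: "'g::{ab_group_add,finite} \<Rightarrow> complex" and Sigma :: "('g \<Rightarrow> complex) set"
  assumes q: "1 \<le> q" "q \<le> 2" and "0 < p" "0 \<le> rho" "Sigma \<subseteq> characters"
    and restr: "Lp_set q (\<lambda>\<xi>. cmod (fourier g \<xi>)) Sigma \<le> rho * Lp_set p (\<lambda>x. cmod (g x)) UNIV"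
    and supp: "\<And>x. x \<notin> S \<Longrightarrow> g x = 0"
  shows "(real CARD('g) powr (1 / q - 1 / 2) - rho * real (card S) powr (1 / p)) * sup_norm g
    \<le> real (card (characters - Sigma)) powr (1 / q - 1 / 2)
        * L2_set (\<lambda>\<xi>. cmod (fourier g \<xi>)) (characters - Sigma)"
proof -
  let ?n = "real CARD('g)" and ?F = "\<lambda>\<xi>. cmod (fourier g \<xi>)"
  obtain x where x: "sup_norm g = cmod (g x)"
    by (rule sup_norm_attained)
  have "?n powr (1 / q - 1 / 2) * sup_norm g
      \<le> ?n powr (1 / q - 1 / 2) * (?n powr (1 / 2 - 1 / q) * Lp_set q ?F characters)"
    unfolding x using norm_le_Lp_set_fourier[OF q(1)] by (rule mult_left_mono) simp
  also have "\<dots> = Lp_set q ?F characters"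
    by (simp add: powr_add[symmetric] mult.assoc[symmetric])
  also have "\<dots> \<le> Lp_set q ?F Sigma + Lp_set q ?F (characters - Sigma)"
    using q assms(5) finite_characters by (intro Lp_set_split_le) auto
  also have "Lp_set q ?F Sigma \<le> rho * real (card S) powr (1 / p) * sup_norm g"
    using order_trans[OF restr mult_left_mono[OF Lp_set_le_card_support[of p S g, OF \<open>0 < p\<close> supp]
          \<open>0 \<le> rho\<close>]]
    by (simp add: mult.assoc)
  also have "Lp_set q ?F (characters - Sigma)
      \<le> real (card (characters - Sigma)) powr (1 / q - 1 / 2) * L2_set ?F (characters - Sigma)"
    using q Lp_set_le_card_powr_Lp_set[OF finite_Diff[OF finite_characters, of Sigma], of ?F q 2]
    by (simp add: L2_set_eq_Lp_set)
  finally show ?thesis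
    by (simp add: algebra_simps)
qed

lemma L2_set_if_zero:
  assumes "finite A"
  shows "L2_set (\<lambda>x. if x \<in> S then 0 else u x) A = L2_set u (A - S)"
  using assms unfolding L2_set_def by (simp add: if_distrib[of "\<lambda>x. x\<^sup>2"] sum.If_cases Diff_eq)

lemma L2_set_fourier_restrict_le:
  fixes f :: "'g::{ab_group_add,finite} \<Rightarrow> complex"
  assumes "A \<subseteq> characters"
  shows "L2_set (\<lambda>\<xi>. cmod (fourier (\<lambda>x. if x \<in> S then f x else 0) \<xi>)) A
    \<le> L2_set (\<lambda>\<xi>. cmod (fourier f \<xi>)) A + L2_set (\<lambda>x. cmod (f x)) (UNIV - S)"
proof -
  define h where "h x = (if x \<in> S then 0 else f x)" for x
  have "fourier (\<lambda>x. if x \<in> S then f x else 0) \<xi> = fourier f \<xi> - fourier h \<xi>" for \<xi>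
    unfolding fourier_diff[symmetric] h_def by (rule arg_cong[where f = "\<lambda>f. fourier f \<xi>"]) auto
  then have "L2_set (\<lambda>\<xi>. cmod (fourier (\<lambda>x. if x \<in> S then f x else 0) \<xi>)) A
      \<le> L2_set (\<lambda>\<xi>. cmod (fourier f \<xi>) + cmod (fourier h \<xi>)) A"
    by (intro L2_set_mono) (auto intro: norm_triangle_ineq4)
  also have "\<dots> \<le> L2_set (\<lambda>\<xi>. cmod (fourier f \<xi>)) A + L2_set (\<lambda>\<xi>. cmod (fourier h \<xi>)) A"
    by (rule L2_set_triangle_ineq)
  also have "L2_set (\<lambda>\<xi>. cmod (fourier h \<xi>)) A \<le> L2_set (\<lambda>x. cmod (h x)) UNIV"
    using assms by (rule L2_set_fourier_le)
  also have "(\<lambda>x. cmod (h x)) = (\<lambda>x. if x \<in> S then 0 else cmod (f x))"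
    by (auto simp: h_def)
  also have "L2_set \<dots> UNIV = L2_set (\<lambda>x. cmod (f x)) (UNIV - S)"
    by (simp add: L2_set_if_zero)
  finally show ?thesis
    by simp
qed

theorem strong_annihilating_pair:
  fixes f :: "'g::{ab_group_add,finite} \<Rightarrow> complex" and Sigma :: "('g \<Rightarrow> complex) set"
  assumes "0 < p" "1 \<le> q" "q \<le> 2" "Sigma \<subseteq> characters"
    and restr: "\<forall>f :: 'g \<Rightarrow> complex.
      Lp_set q (\<lambda>\<xi>. cmod (fourier f \<xi>)) Sigma \<le> rho * Lp_set p (\<lambda>x. cmod (f x)) UNIV"
    and small: "rho * real (card S) powr (1 / p) < real CARD('g) powr (1 / q - 1 / 2)"
  shows "L2_set (\<lambda>x. cmod (f x)) UNIV
    \<le> (1 + real (card S) powr (1 / 2) * real (card (characters - Sigma)) powr (1 / q - 1 / 2)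
          / (real CARD('g) powr (1 / q - 1 / 2) - rho * real (card S) powr (1 / p)))
      * (L2_set (\<lambda>x. cmod (f x)) (UNIV - S) + L2_set (\<lambda>\<xi>. cmod (fourier f \<xi>)) (characters - Sigma))"
proof -
  define g where "g x = (if x \<in> S then f x else 0)" for x
  define D where "D = real CARD('g) powr (1 / q - 1 / 2) - rho * real (card S) powr (1 / p)"
  define K where "K = real (card (characters - Sigma)) powr (1 / q - 1 / 2)"
  define a where "a = L2_set (\<lambda>x. cmod (f x)) (UNIV - S)"
  define b where "b = L2_set (\<lambda>\<xi>. cmod (fourier f \<xi>)) (characters - Sigma)"
  have "0 < D"
    using small by (simp add: D_def)
  have "D * sup_norm g \<le> K * L2_set (\<lambda>\<xi>. cmod (fourier g \<xi>)) (characters - Sigma)"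
    unfolding D_def K_def
    by (rule sup_norm_le_fourier_off_Sigma[OF assms(2,3,1) restriction_constant_nonneg[OF restr]
          assms(4) restr[rule_format]]) (simp add: g_def)
  also have "\<dots> \<le> K * (b + a)"
    unfolding a_def b_def g_def by (intro mult_left_mono L2_set_fourier_restrict_le) (auto simp: K_def)
  finally have sup_bound: "sup_norm g \<le> K * (a + b) / D"
    using \<open>0 < D\<close> by (simp add: pos_le_divide_eq mult.commute add.commute)
  have "L2_set (\<lambda>x. cmod (g x)) UNIV \<le> real (card S) powr (1 / 2) * sup_norm g"
    using Lp_set_le_card_support[of 2 S g] by (simp add: L2_set_eq_Lp_set g_def)
  also have "\<dots> \<le> real (card S) powr (1 / 2) * (K * (a + b) / D)"
    using sup_bound by (rule mult_left_mono) simp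
  finally have g_bound: "L2_set (\<lambda>x. cmod (g x)) UNIV \<le> real (card S) powr (1 / 2) * (K * (a + b) / D)" .
  have "(\<lambda>x. (if x \<in> S then 0 else cmod (f x)) + cmod (g x)) = (\<lambda>x. cmod (f x))"
    by (auto simp: g_def)
  then have "L2_set (\<lambda>x. cmod (f x)) UNIV \<le> a + L2_set (\<lambda>x. cmod (g x)) UNIV"
    using L2_set_triangle_ineq[of "\<lambda>x. if x \<in> S then 0 else cmod (f x)" "\<lambda>x. cmod (g x)" UNIV]
    by (simp add: a_def L2_set_if_zero)
  also have "\<dots> \<le> a + b + real (card S) powr (1 / 2) * (K * (a + b) / D)"
    using g_bound L2_set_nonneg[of "\<lambda>\<xi>. cmod (fourier f \<xi>)" "characters - Sigma"]
    unfolding b_def by linarith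
  also have "\<dots> = (1 + real (card S) powr (1 / 2) * K / D) * (a + b)"
    using \<open>0 < D\<close> by (simp add: field_simps)
  finally show ?thesis
    unfolding a_def b_def K_def D_def .
qed

theorem theorem3p1:
  fixes S :: "'g::{ab_group_add,finite} set"
    and Sigma :: "('g \<Rightarrow> complex) set"
    and p q rho :: real
  assumes "1 \<le> p" and "p \<le> 2" and "1 \<le> q" and "q \<le> 2"
    and "Sigma \<subseteq> characters"
    and restr: "\<forall>f :: 'g \<Rightarrow> complex.
        (\<Sum>c\<in>Sigma. cmod (fourier f c) powr q) powr (1 / q)
          \<le> rho * (\<Sum>x\<in>UNIV. cmod (f x) powr p) powr (1 / p)"
    and small: "rho * real (card S) powr (1 / p) < real CARD('g) powr (1 / q - 1 / 2)"
  shows "\<forall>f :: 'g \<Rightarrow> complex.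
     sqrt (\<Sum>x\<in>UNIV. cmod (f x) ^ 2)
       \<le> (1 + real (card S) powr (1 / 2) * real (card (characters - Sigma)) powr (1 / q - 1 / 2)
               / (real CARD('g) powr (1 / q - 1 / 2) - rho * real (card S) powr (1 / p)))
         * (sqrt (\<Sum>x\<in>UNIV - S. cmod (f x) ^ 2)
            + sqrt (\<Sum>c\<in>characters - Sigma. cmod (fourier f c) ^ 2))"
proof -
  have "0 < p"
    using \<open>1 \<le> p\<close> by simp
  moreover have "\<forall>f :: 'g \<Rightarrow> complex.
      Lp_set q (\<lambda>\<xi>. cmod (fourier f \<xi>)) Sigma \<le> rho * Lp_set p (\<lambda>x. cmod (f x)) UNIV"
    using restr unfolding Lp_set_def .
  ultimately show ?thesis
    using strong_annihilating_pair[of p q Sigma rho S] assms(3-5) small unfolding L2_set_def by blast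
qed

end
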